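(* Fix $w>0$ and $\rho\in(-1,1)$. Let $(x_j,y_j)$, $j=1,\dots,k$, be i.i.d. pairs from the bivariate normal distribution with mean $(0,0)$, unit variances and correlation $\rho$. Code each real number $t$ by $c(t)=0$ if $t\le -w$, $c(t)=1$ if $-w<t\le 0$, $c(t)=2$ if $0<t\le w$, $c(t)=3$ if $t>w$. For $i,j\in\{0,1,2,3\}$ let $k_{i,j}$ be the number of indices $j'$ with $(c(x_{j'}),c(y_{j'}))=(i,j)$, let $P_{i,j}(\rho,w)=\Pr(c(x)=i,\,c(y)=j)$ for one such pair $(x,y)$, and let $l(\rho,w)=\sum_{i,j}k_{i,j}\log P_{i,j}(\rho,w)$ be the log-likelihood. Define $P_{2,2}(\rho,w)=\Pr(0<x\le w,\ 0<y\le w)$, $P_{2,3}(\rho,w)=\Pr(x>w,\ 0<y\le w)$, $P_{3,3}(\rho,w)=\Pr(x>w,\ y>w)$, and write $P'_{a,b}(\rho,w)=\frac{\partial}{\partial\rho}P_{a,b}(\rho,w)$ (so $P'_{a,b}(-\rho,w)$ denotes this derivative evaluated at $-\rho$). Then the Fisher information $I_{2,\rho,w}=-E\left[\frac{\partial^2}{\partial\rho^2}l(\rho,w)\right]$ equals $$I_{2,\rho,w}=2k\,A,$$ where $$A=\frac{(P_{2,2}'(\rho,w))^2}{P_{2,2}(\rho,w)}+2\frac{(P_{2,3}'(\rho,w))^2}{P_{2,3}(\rho,w)}+\frac{(P_{3,3}'(\rho,w))^2}{P_{3,3}(\rho,w)}+\frac{(P_{2,2}'(-\rho,w))^2}{P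_{2,2}(-\rho,w)}+2\frac{(P_{2,3}'(-\rho,w))^2}{P_{2,3}(-\rho,w)}+\frac{(P_{3,3}'(-\rho,w))^2}{P_{3,3}(-\rho,w)}.$$
   Context: This is the "2-bit random projection" model: $(x,y)$ arise as projections $x=\sum_i u_ir_i$, $y=\sum_i v_ir_i$ of unit-norm vectors $u,v$ with correlation $\rho=\sum_i u_iv_i$ onto i.i.d. $N(0,1)$ entries $r_i$, and each projection is quantized into 2 bits by the thresholds $-w,0,w$. The Fisher information governs the asymptotic variance $1/I_{2,\rho,w}+O(1/k^2)$ of the maximum likelihood estimator of $\rho$ based on the counts $k_{i,j}$. *)

theory Defs
  imports "HOL-Probability.Probability"
begin

definition bvn_pdf :: "real \<Rightarrow> real \<times> real \<Rightarrow> real" where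
  "bvn_pdf rho z = exp (- ((fst z)\<^sup>2 - 2 * rho * fst z * snd z + (snd z)\<^sup>2) / (2 * (1 - rho\<^sup>2)))
                     / (2 * pi * sqrt (1 - rho\<^sup>2))"

definition bvn :: "real \<Rightarrow> (real \<times> real) measure" where
  "bvn rho = density lborel (\<lambda>z. ennreal (bvn_pdf rho z))"

definition code2 :: "real \<Rightarrow> real \<Rightarrow> nat" where
  "code2 w t = (if t \<le> - w then 0 else if t \<le> 0 then 1 else if t \<le> w then 2 else 3)"

definition Pcell :: "nat \<Rightarrow> nat \<Rightarrow> real \<Rightarrow> real \<Rightarrow> real" where
  "Pcell i j rho w = measure (bvn rho) {z. code2 w (fst z) = i \<and> code2 w (snd z) = j}"

definition P22 :: "real \<Rightarrow> real \<Rightarrow> real" where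
  "P22 rho w = measure (bvn rho) {z. 0 < fst z \<and> fst z \<le> w \<and> 0 < snd z \<and> snd z \<le> w}"

definition P23 :: "real \<Rightarrow> real \<Rightarrow> real" where
  "P23 rho w = measure (bvn rho) {z. fst z > w \<and> 0 < snd z \<and> snd z \<le> w}"

definition P33 :: "real \<Rightarrow> real \<Rightarrow> real" where
  "P33 rho w = measure (bvn rho) {z. fst z > w \<and> snd z > w}"

definition sample :: "nat \<Rightarrow> real \<Rightarrow> (nat \<Rightarrow> real \<times> real) measure" where
  "sample k rho = PiM {..<k} (\<lambda>_. bvn rho)"

definition cnt :: "real \<Rightarrow> nat \<Rightarrow> nat \<Rightarrow> nat \<Rightarrow> (nat \<Rightarrow> real \<times> real) \<Rightarrow> nat" where
  "cnt w k i j \<omega> = card {m \<in> {..<k}. code2 w (fst (\<omega> m)) = i \<and> code2 w (snd (\<omega> m)) = j}"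

definition loglik :: "real \<Rightarrow> nat \<Rightarrow> (nat \<Rightarrow> real \<times> real) \<Rightarrow> real \<Rightarrow> real" where
  "loglik w k \<omega> rho = (\<Sum>i\<in>{0..3}. \<Sum>j\<in>{0..3}. real (cnt w k i j \<omega>) * ln (Pcell i j rho w))"

definition fisher2 :: "nat \<Rightarrow> real \<Rightarrow> real \<Rightarrow> real" where
  "fisher2 k rho w = - (\<integral>\<omega>. deriv (deriv (loglik w k \<omega>)) rho \<partial>sample k rho)"

end

theory Submission
  imports Defs
begin

text \<open>Differentiating twice
  and using \<open>E k\<^sub>i\<^sub>j = k P\<^sub>i\<^sub>j\<close> gives \<open>k \<Sum> P'\<^sub>i\<^sub>j\<^sup>2 / P\<^sub>i\<^sub>j - k \<Sum> P''\<^sub>i\<^sub>j\<close>, and the last sum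
  vanishes because \<open>\<Sum> P\<^sub>i\<^sub>j = 1\<close> for every \<open>\<rho>\<close>. The cell probabilities may be differentiated twice
  under the integral sign because the density and its first two \<open>\<rho>\<close>-derivatives share a Gaussian
  envelope, uniformly for \<open>\<rho>\<close> in compact subintervals of \<open>(-1, 1)\<close>. Finally, the symmetries
  \<open>(x, y) \<mapsto> (-x, -y)\<close> and \<open>(x, y) \<mapsto> (y, x)\<close> of the bivariate normal law, and \<open>(x, y) \<mapsto> (-x, y)\<close>,
  which replaces \<open>\<rho>\<close> by \<open>-\<rho>\<close>, identify every cell with \<open>P\<^sub>2\<^sub>2\<close>, \<open>P\<^sub>2\<^sub>3\<close> or \<open>P\<^sub>3\<^sub>3\<close>
  at \<open>\<rho>\<close> or at \<open>-\<rho>\<close>; the threshold lines where the coding is not symmetric are null sets.\<close>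

lemma abs_difference_quotient_le:
  fixes f f' :: "real \<Rightarrow> real"
  assumes der: "\<And>t. t \<in> {a<..<b} \<Longrightarrow> (f has_real_derivative f' t) (at t)"
    and bnd: "\<And>t. t \<in> {a<..<b} \<Longrightarrow> \<bar>f' t\<bar> \<le> B"
    and "y \<in> {a<..<b}" "z \<in> {a<..<b}" "y \<noteq> z"
  shows "\<bar>(f y - f z) / (y - z)\<bar> \<le> B"
proof -
  have mvt: "\<bar>f v - f u\<bar> \<le> B * (v - u)" if "u < v" "u \<in> {a<..<b}" "v \<in> {a<..<b}" for u v
  proof -
    have "\<And>t. u \<le> t \<Longrightarrow> t \<le> v \<Longrightarrow> (f has_real_derivative f' t) (at t)"
      using that by (intro der) auto
    from MVT2[OF \<open>u < v\<close> this] obtain t where "u < t" "t < v" "f v - f u = (v - u) * f' t"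
      by auto
    with that bnd[of t] show ?thesis by (simp add: abs_mult mult.commute mult_right_mono)
  qed
  have "\<bar>f y - f z\<bar> \<le> B * \<bar>y - z\<bar>"
  proof (cases "y < z")
    case True
    then show ?thesis using mvt[of y z] assms(3,4) by (simp add: abs_minus_commute)
  next
    case False
    then show ?thesis using mvt[of z y] assms(3-5) by simp
  qed
  then show ?thesis using assms(5) by (simp add: divide_le_eq)
qed

lemma has_real_derivative_integral:
  fixes f f' :: "real \<Rightarrow> 'a \<Rightarrow> real" and g :: "'a \<Rightarrow> real"
  assumes r0: "a < r0" "r0 < b"
  and int: "\<And>r. r \<in> {a<..<b} \<Longrightarrow> integrable M (f r)"
  and meas: "\<And>r. r \<in> {a<..<b} \<Longrightarrow> f' r \<in> borel_measurable M"
  and der: "\<And>r x. r \<in> {a<..<b} \<Longrightarrow> x \<in> space M \<Longrightarrow> ((\<lambda>r. f r x) has_real_derivative f' r x) (at r)"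
  and bnd: "\<And>r x. r \<in> {a<..<b} \<Longrightarrow> x \<in> space M \<Longrightarrow> \<bar>f' r x\<bar> \<le> g x"
  and gint: "integrable M g"
  shows "((\<lambda>r. \<integral>x. f r x \<partial>M) has_real_derivative (\<integral>x. f' r0 x \<partial>M)) (at r0)"
proof -
  have r0in: "r0 \<in> {a<..<b}" using r0 by simp
  let ?q = "\<lambda>y x. (f y x - f r0 x) / (y - r0)"
  have "((\<lambda>y. ((\<integral>x. f y x \<partial>M) - (\<integral>x. f r0 x \<partial>M)) / (y - r0)) \<longlongrightarrow> (\<integral>x. f' r0 x \<partial>M))
          (at r0 within {a<..<b})"
  proof (subst tendsto_at_iff_sequentially, intro allI impI)
    fix X :: "nat \<Rightarrow> real" assume XS: "\<forall>i. X i \<in> {a<..<b} - {r0}" and XL: "X \<longlonglongrightarrow> r0"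
    have "(\<lambda>i. \<integral>x. ?q (X i) x \<partial>M) \<longlonglongrightarrow> (\<integral>x. f' r0 x \<partial>M)"
    proof (rule integral_dominated_convergence[where w=g])
      show "?q (X i) \<in> borel_measurable M" for i
        using int[of "X i"] int[OF r0in] XS by (intro borel_measurable_divide borel_measurable_diff) auto
      show "AE x in M. (\<lambda>i. ?q (X i) x) \<longlonglongrightarrow> f' r0 x"
      proof (rule AE_I2)
        fix x assume "x \<in> space M"
        have "((\<lambda>y. ?q y x) \<longlongrightarrow> f' r0 x) (at r0)"
          using der[OF r0in \<open>x \<in> space M\<close>] by (simp add: has_field_derivative_iff)
        moreover have "filterlim X (at r0) sequentially"
          using XL XS by (intro filterlim_atI) auto
        ultimately show "(\<lambda>i. ?q (X i) x) \<longlonglongrightarrow> f' r0 x"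
          by (rule filterlim_compose)
      qed
      show "AE x in M. norm (?q (X i) x) \<le> g x" for i
      proof (rule AE_I2)
        fix x assume x: "x \<in> space M"
        show "norm (?q (X i) x) \<le> g x"
          using abs_difference_quotient_le[where f = "\<lambda>r. f r x", OF der[OF _ x] bnd[OF _ x]] XS r0in
          by auto
      qed
    qed (use meas[OF r0in] gint in auto)
    moreover have "((\<integral>x. f (X i) x \<partial>M) - (\<integral>x. f r0 x \<partial>M)) / (X i - r0) = (\<integral>x. ?q (X i) x \<partial>M)" for i
      using int[of "X i"] int[OF r0in] XS by simp
    ultimately show "((\<lambda>y. ((\<integral>x. f y x \<partial>M) - (\<integral>x. f r0 x \<partial>M)) / (y - r0)) \<circ> X) \<longlonglongrightarrow> (\<integral>x. f' r0 x \<partial>M)"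
      by (simp only: o_def)
  qed
  then show ?thesis
    using at_within_open[OF r0in] by (simp add: has_field_derivative_iff)
qed

lemma DERIV_eq_0_if_constant_on_open:
  fixes f :: "real \<Rightarrow> real"
  assumes "(f has_real_derivative D) (at x)" "open U" "x \<in> U" "\<And>y. y \<in> U \<Longrightarrow> f y = f x"
  shows "D = 0"
proof -
  obtain e where e: "0 < e" "ball x e \<subseteq> U" using assms(2,3) by (rule openE)
  have "\<forall>y. \<bar>x - y\<bar> < e \<longrightarrow> f x = f y"
  proof (intro allI impI)
    fix y assume "\<bar>x - y\<bar> < e"
    then have "y \<in> U" using e by (auto simp: dist_real_def subset_iff)
    then show "f x = f y" using assms(4) by simp
  qed
  then show ?thesis using DERIV_local_const[OF assms(1) e(1)] by blast
qed

lemma deriv_comp_uminus: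
  fixes g :: "real \<Rightarrow> real"
  assumes "g differentiable (at (- x))"
  shows "deriv (\<lambda>r. g (- r)) x = - deriv g (- x)"
proof -
  have "((\<lambda>r. g (- r)) has_real_derivative deriv g (- x) * (- 1)) (at x)"
    using assms by (intro DERIV_chain2[of g] derivative_eq_intros)
       (auto simp: DERIV_deriv_iff_real_differentiable)
  then show ?thesis by (simp add: DERIV_imp_deriv)
qed

section \<open>Fisher information of a finite family of probabilities\<close>

lemma deriv2_weighted_sum_ln:
  fixes p :: "'c \<Rightarrow> real \<Rightarrow> real" and n :: "'c \<Rightarrow> real"
  assumes C: "finite C" and U: "open U" "x \<in> U"
    and pos: "\<And>c r. c \<in> C \<Longrightarrow> r \<in> U \<Longrightarrow> 0 < p c r"
    and diff: "\<And>c r. c \<in> C \<Longrightarrow> r \<in> U \<Longrightarrow> p c differentiable (at r)"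
    and diff2: "\<And>c. c \<in> C \<Longrightarrow> deriv (p c) differentiable (at x)"
  shows "deriv (deriv (\<lambda>r. \<Sum>c\<in>C. n c * ln (p c r))) x
       = (\<Sum>c\<in>C. n c * (deriv (deriv (p c)) x / p c x - (deriv (p c) x / p c x)\<^sup>2))"
proof -
  have p': "(p c has_real_derivative deriv (p c) r) (at r)" if "c \<in> C" "r \<in> U" for c r
    using diff[OF that] by (simp add: DERIV_deriv_iff_real_differentiable)
  have p'': "(deriv (p c) has_real_derivative deriv (deriv (p c)) x) (at x)" if "c \<in> C" for c
    using diff2[OF that] by (simp add: DERIV_deriv_iff_real_differentiable)
  have "eventually (\<lambda>r. r \<in> U) (nhds x)" using U by (rule eventually_nhds_in_open)
  then have "eventually (\<lambda>r. deriv (\<lambda>r. \<Sum>c\<in>C. n c * ln (p c r)) r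
                             = (\<Sum>c\<in>C. n c * (deriv (p c) r / p c r))) (nhds x)"
  proof eventually_elim
    case (elim r)
    have "((\<lambda>r. ln (p c r)) has_real_derivative deriv (p c) r / p c r) (at r)" if "c \<in> C" for c
      using DERIV_chain2[OF DERIV_ln_divide[OF pos[OF that elim]] p'[OF that elim]] by simp
    then show ?case by (intro DERIV_imp_deriv DERIV_sum DERIV_cmult) auto
  qed
  then have "deriv (deriv (\<lambda>r. \<Sum>c\<in>C. n c * ln (p c r))) x
           = deriv (\<lambda>r. \<Sum>c\<in>C. n c * (deriv (p c) r / p c r)) x"
    by (rule deriv_cong_ev) simp
  also have "\<dots> = (\<Sum>c\<in>C. n c * ((deriv (deriv (p c)) x * p c x - deriv (p c) x * deriv (p c) x)
                                  / (p c x * p c x)))"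
    using pos[OF _ U(2)]
    by (intro DERIV_imp_deriv DERIV_sum DERIV_cmult DERIV_divide p'' p' U(2)) (auto simp: less_le)
  also have "\<dots> = (\<Sum>c\<in>C. n c * (deriv (deriv (p c)) x / p c x - (deriv (p c) x / p c x)\<^sup>2))"
    using pos[OF _ U(2)] by (intro sum.cong refl) (simp add: diff_divide_distrib power_divide power2_eq_square)
  finally show ?thesis .
qed

lemma sum_deriv2_eq_0:
  fixes p :: "'c \<Rightarrow> real \<Rightarrow> real"
  assumes C: "finite C" and U: "open U" "x \<in> U"
    and diff: "\<And>c r. c \<in> C \<Longrightarrow> r \<in> U \<Longrightarrow> p c differentiable (at r)"
    and diff2: "\<And>c. c \<in> C \<Longrightarrow> deriv (p c) differentiable (at x)"
    and total: "\<And>r. r \<in> U \<Longrightarrow> (\<Sum>c\<in>C. p c r) = 1"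
  shows "(\<Sum>c\<in>C. deriv (deriv (p c)) x) = 0"
proof -
  have sum_deriv: "(\<Sum>c\<in>C. deriv (p c) r) = 0" if "r \<in> U" for r
  proof (rule DERIV_eq_0_if_constant_on_open[OF _ U(1) that])
    show "((\<lambda>r. \<Sum>c\<in>C. p c r) has_real_derivative (\<Sum>c\<in>C. deriv (p c) r)) (at r)"
      using diff that by (intro DERIV_sum) (simp add: DERIV_deriv_iff_real_differentiable)
  qed (use total that in simp)
  show ?thesis
  proof (rule DERIV_eq_0_if_constant_on_open[OF _ U])
    show "((\<lambda>r. \<Sum>c\<in>C. deriv (p c) r) has_real_derivative (\<Sum>c\<in>C. deriv (deriv (p c)) x)) (at x)"
      using diff2 by (intro DERIV_sum) (simp add: DERIV_deriv_iff_real_differentiable)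
  qed (use sum_deriv U in simp)
qed

lemma fisher_information_finite_family:
  fixes p :: "'c \<Rightarrow> real \<Rightarrow> real" and N :: "'c \<Rightarrow> 'a \<Rightarrow> real"
  assumes C: "finite C" and U: "open U" "x \<in> U"
    and pos: "\<And>c r. c \<in> C \<Longrightarrow> r \<in> U \<Longrightarrow> 0 < p c r"
    and diff: "\<And>c r. c \<in> C \<Longrightarrow> r \<in> U \<Longrightarrow> p c differentiable (at r)"
    and diff2: "\<And>c. c \<in> C \<Longrightarrow> deriv (p c) differentiable (at x)"
    and total: "\<And>r. r \<in> U \<Longrightarrow> (\<Sum>c\<in>C. p c r) = 1"
    and int: "\<And>c. c \<in> C \<Longrightarrow> integrable M (N c)"
    and mean: "\<And>c. c \<in> C \<Longrightarrow> (\<integral>\<omega>. N c \<omega> \<partial>M) = k * p c x"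
  shows "- (\<integral>\<omega>. deriv (deriv (\<lambda>r. \<Sum>c\<in>C. N c \<omega> * ln (p c r))) x \<partial>M)
       = k * (\<Sum>c\<in>C. (deriv (p c) x)\<^sup>2 / p c x)"
proof -
  let ?score2 = "\<lambda>c. deriv (deriv (p c)) x / p c x - (deriv (p c) x / p c x)\<^sup>2"
  have "- (\<integral>\<omega>. deriv (deriv (\<lambda>r. \<Sum>c\<in>C. N c \<omega> * ln (p c r))) x \<partial>M)
        = - (\<integral>\<omega>. (\<Sum>c\<in>C. N c \<omega> * ?score2 c) \<partial>M)"
    by (simp only: deriv2_weighted_sum_ln[OF C U pos diff diff2])
  also have "\<dots> = - (\<Sum>c\<in>C. k * p c x * ?score2 c)"
    using int by (simp add: mean)
  also have "\<dots> = (\<Sum>c\<in>C. k * ((deriv (p c) x)\<^sup>2 / p c x) - k * deriv (deriv (p c)) x)"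
    unfolding sum_negf[symmetric] using pos[OF _ U(2)]
    by (intro sum.cong refl) (simp add: field_simps power2_eq_square less_le)
  also have "\<dots> = k * (\<Sum>c\<in>C. (deriv (p c) x)\<^sup>2 / p c x) - k * (\<Sum>c\<in>C. deriv (deriv (p c)) x)"
    by (simp add: sum_subtractf sum_distrib_left)
  finally show ?thesis by (simp add: sum_deriv2_eq_0[OF C U diff diff2 total])
qed

section \<open>The bivariate normal density and its derivatives in the correlation\<close>

lemma power2_norm_prod: "(norm z)\<^sup>2 = (fst z)\<^sup>2 + (snd z :: real)\<^sup>2"
  by (cases z) (simp add: norm_Pair)

definition bvn_log_pdf :: "real \<Rightarrow> real \<times> real \<Rightarrow> real" where
  "bvn_log_pdf r z = - ((fst z)\<^sup>2 - 2 * r * fst z * snd z + (snd z)\<^sup>2) / (2 * (1 - r\<^sup>2))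
                    - ln (2 * pi) - ln (1 - r\<^sup>2) / 2"

definition bvn_score :: "real \<Rightarrow> real \<times> real \<Rightarrow> real" where
  "bvn_score r z = (fst z * snd z * (1 + r\<^sup>2) - r * (norm z)\<^sup>2) / (1 - r\<^sup>2)\<^sup>2 + r / (1 - r\<^sup>2)"

definition bvn_score_deriv :: "real \<Rightarrow> real \<times> real \<Rightarrow> real" where
  "bvn_score_deriv r z = (2 * r * fst z * snd z - (norm z)\<^sup>2) / (1 - r\<^sup>2)\<^sup>2
      + 4 * r * (fst z * snd z * (1 + r\<^sup>2) - r * (norm z)\<^sup>2) / (1 - r\<^sup>2) ^ 3
      + (1 + r\<^sup>2) / (1 - r\<^sup>2)\<^sup>2"

lemma one_minus_square_pos: "\<bar>r::real\<bar> < 1 \<Longrightarrow> 0 < 1 - r\<^sup>2"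
  by (simp add: abs_square_less_1)

lemma one_minus_square_le: "\<bar>r\<bar> \<le> c \<Longrightarrow> 1 - c\<^sup>2 \<le> 1 - (r::real)\<^sup>2"
  using power_mono[of "\<bar>r\<bar>" c 2] by simp

lemma bvn_pdf_eq_exp_log_pdf: "\<bar>r\<bar> < 1 \<Longrightarrow> bvn_pdf r z = exp (bvn_log_pdf r z)"
  by (drule one_minus_square_pos)
     (simp add: bvn_pdf_def bvn_log_pdf_def exp_diff ln_sqrt[symmetric] ln_mult[symmetric])

lemma has_real_derivative_bvn_log_pdf:
  "\<bar>r\<bar> < 1 \<Longrightarrow> ((\<lambda>r. bvn_log_pdf r z) has_real_derivative bvn_score r z) (at r)"
  unfolding bvn_log_pdf_def bvn_score_def power2_norm_prod
  by (drule one_minus_square_pos) (auto intro!: derivative_eq_intros, simp add: divide_simps, algebra)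

lemma has_real_derivative_bvn_score:
  "\<bar>r\<bar> < 1 \<Longrightarrow> ((\<lambda>r. bvn_score r z) has_real_derivative bvn_score_deriv r z) (at r)"
  unfolding bvn_score_deriv_def bvn_score_def
  by (drule one_minus_square_pos) (auto intro!: derivative_eq_intros, simp add: divide_simps, algebra)

lemma bvn_pdf_pos: "\<bar>r\<bar> < 1 \<Longrightarrow> 0 < bvn_pdf r z"
  by (drule one_minus_square_pos) (simp add: bvn_pdf_def)

lemma has_real_derivative_bvn_pdf:
  assumes "\<bar>r\<bar> < 1"
  shows "((\<lambda>r. bvn_pdf r z) has_real_derivative bvn_pdf r z * bvn_score r z) (at r)"
proof -
  have "((\<lambda>r. exp (bvn_log_pdf r z)) has_real_derivative bvn_pdf r z * bvn_score r z) (at r)"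
    using DERIV_chain2[OF DERIV_exp has_real_derivative_bvn_log_pdf[OF assms]]
    by (simp add: bvn_pdf_eq_exp_log_pdf[OF assms] mult.commute)
  then show ?thesis
    by (rule has_field_derivative_transform_within_open[where S = "{-1<..<1}"])
       (use assms in \<open>auto simp: bvn_pdf_eq_exp_log_pdf abs_less_iff\<close>)
qed

lemma has_real_derivative_bvn_pdf_score:
  assumes "\<bar>r\<bar> < 1"
  shows "((\<lambda>r. bvn_pdf r z * bvn_score r z) has_real_derivative
           bvn_pdf r z * ((bvn_score r z)\<^sup>2 + bvn_score_deriv r z)) (at r)"
  using DERIV_mult[OF has_real_derivative_bvn_pdf[OF assms] has_real_derivative_bvn_score[OF assms]]
  by (simp add: algebra_simps power2_eq_square)

lemma abs_mult_le_half_power2_norm: "\<bar>fst z * snd z\<bar> \<le> (norm z)\<^sup>2 / (2::real)"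
proof -
  have "0 \<le> (\<bar>fst z\<bar> - \<bar>snd z\<bar>)\<^sup>2" by simp
  then show ?thesis unfolding power2_norm_prod by (simp add: power2_eq_square algebra_simps abs_mult)
qed

lemma bvn_pdf_le:
  assumes "\<bar>r\<bar> \<le> c" "c < 1"
  shows "bvn_pdf r z \<le> exp (- (norm z)\<^sup>2 / 4) / sqrt (1 - c\<^sup>2)"
proof -
  define N where "N = (norm z)\<^sup>2"
  define Q where "Q = (fst z)\<^sup>2 - 2 * r * fst z * snd z + (snd z)\<^sup>2"
  have s: "0 < 1 - r\<^sup>2" using assms by (intro one_minus_square_pos) simp
  have m: "0 < 1 - c\<^sup>2" using assms by (intro one_minus_square_pos) simp
  have "\<bar>2 * r * fst z * snd z\<bar> \<le> \<bar>r\<bar> * N"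
    using mult_left_mono[OF abs_mult_le_half_power2_norm[of z], of "2 * \<bar>r\<bar>"]
    by (simp add: abs_mult N_def)
  then have "(1 - \<bar>r\<bar>) * N \<le> Q" by (simp add: Q_def N_def power2_norm_prod algebra_simps abs_le_iff)
  moreover have "1 - r\<^sup>2 \<le> 2 * (1 - \<bar>r\<bar>)"
  proof -
    have "1 - r\<^sup>2 = (1 - \<bar>r\<bar>) * (1 + \<bar>r\<bar>)" by (simp add: algebra_simps power2_eq_square)
    also have "\<dots> \<le> (1 - \<bar>r\<bar>) * 2" using assms by (intro mult_left_mono) auto
    finally show ?thesis by simp
  qed
  ultimately have "(1 - r\<^sup>2) * N \<le> 2 * Q"
    using mult_right_mono[of "1 - r\<^sup>2" "2 * (1 - \<bar>r\<bar>)" N] by (simp add: N_def algebra_simps)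
  then have "N / 4 \<le> Q / (2 * (1 - r\<^sup>2))" using s by (simp add: field_simps)
  then have "exp (- Q / (2 * (1 - r\<^sup>2))) \<le> exp (- N / 4)" by simp
  moreover have "sqrt (1 - c\<^sup>2) \<le> 2 * pi * sqrt (1 - r\<^sup>2)"
  proof -
    have "sqrt (1 - c\<^sup>2) \<le> sqrt (1 - r\<^sup>2)" using one_minus_square_le[OF assms(1)] by simp
    also have "\<dots> \<le> 2 * pi * sqrt (1 - r\<^sup>2)" using pi_gt3 s by (simp add: mult_le_cancel_right1)
    finally show ?thesis .
  qed
  ultimately show ?thesis
    using m by (simp add: bvn_pdf_def Q_def N_def frac_le)
qed

lemma divide_power_le_divide_cube:
  fixes m s x y :: real
  assumes "0 < m" "m \<le> s" "m \<le> 1" "0 \<le> x" "x \<le> y" "k \<le> 3"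
  shows "x / s ^ k \<le> y / m ^ 3"
proof -
  have "m ^ 3 \<le> m ^ k" using assms by (intro power_decreasing) auto
  also have "\<dots> \<le> s ^ k" using assms by (intro power_mono) auto
  finally have "x / s ^ k \<le> x / m ^ 3" using assms by (intro divide_left_mono) auto
  also have "\<dots> \<le> y / m ^ 3" using assms by (intro divide_right_mono) auto
  finally show ?thesis .
qed

lemma abs_bvn_score_numerator_le:
  assumes "\<bar>r\<bar> \<le> 1"
  shows "\<bar>fst z * snd z * (1 + r\<^sup>2) - r * (norm z)\<^sup>2\<bar> \<le> 2 * (norm z)\<^sup>2"
proof -
  have "\<bar>fst z * snd z * (1 + r\<^sup>2) - r * (norm z)\<^sup>2\<bar> \<le> \<bar>fst z * snd z\<bar> * (1 + r\<^sup>2) + \<bar>r\<bar> * (norm z)\<^sup>2"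
    using abs_triangle_ineq4[of "fst z * snd z * (1 + r\<^sup>2)" "r * (norm z)\<^sup>2"] by (simp add: abs_mult)
  also have "\<dots> \<le> ((norm z)\<^sup>2 / 2) * 2 + 1 * (norm z)\<^sup>2"
    using abs_mult_le_half_power2_norm[of z] assms abs_square_le_1[of r]
    by (intro add_mono mult_mono) auto
  finally show ?thesis by simp
qed

lemma abs_bvn_score_le:
  assumes "\<bar>r\<bar> \<le> c" "c < 1"
  shows "\<bar>bvn_score r z\<bar> \<le> 12 / (1 - c\<^sup>2) ^ 3 * (1 + (norm z)\<^sup>2)"
proof -
  define s m N where "s = 1 - r\<^sup>2" and "m = 1 - c\<^sup>2" and "N = (norm z)\<^sup>2"
  have "0 < m" unfolding m_def using assms by (intro one_minus_square_pos) simp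
  then have m: "0 < m" "m \<le> 1" "m \<le> s"
    using one_minus_square_le[OF assms(1)] by (auto simp: m_def s_def)
  have r1: "\<bar>r\<bar> \<le> 1" using assms by simp
  note bound = divide_power_le_divide_cube[OF m(1,3,2)]
  have "\<bar>bvn_score r z\<bar> \<le> \<bar>fst z * snd z * (1 + r\<^sup>2) - r * N\<bar> / s ^ 2 + \<bar>r\<bar> / s ^ 1"
    using abs_triangle_ineq[of "(fst z * snd z * (1 + r\<^sup>2) - r * N) / s\<^sup>2" "r / s"] m
    by (simp add: bvn_score_def N_def s_def)
  also have "\<dots> \<le> (2 * N) / m ^ 3 + 1 / m ^ 3"
    using abs_bvn_score_numerator_le[OF r1, of z] r1 by (intro add_mono bound) (auto simp: N_def)
  also have "\<dots> \<le> 12 / m ^ 3 * (1 + N)" using m by (simp add: field_simps N_def)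
  finally show ?thesis by (simp add: m_def N_def)
qed

lemma abs_bvn_score_deriv_le:
  assumes "\<bar>r\<bar> \<le> c" "c < 1"
  shows "\<bar>bvn_score_deriv r z\<bar> \<le> 12 / (1 - c\<^sup>2) ^ 3 * (1 + (norm z)\<^sup>2)"
proof -
  define s m N p where "s = 1 - r\<^sup>2" and "m = 1 - c\<^sup>2" and "N = (norm z)\<^sup>2" and "p = fst z * snd z"
  have "0 < m" unfolding m_def using assms by (intro one_minus_square_pos) simp
  then have m: "0 < m" "m \<le> 1" "m \<le> s"
    using one_minus_square_le[OF assms(1)] by (auto simp: m_def s_def)
  have r1: "\<bar>r\<bar> \<le> 1" "r\<^sup>2 \<le> 1" using assms by (auto simp: abs_square_le_1)
  have N0: "0 \<le> N" by (simp add: N_def)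
  note bound = divide_power_le_divide_cube[OF m(1,3,2)]
  have num: "\<bar>p * (1 + r\<^sup>2) - r * N\<bar> \<le> 2 * N"
    using abs_bvn_score_numerator_le[OF r1(1)] by (simp add: p_def N_def)
  have "\<bar>r\<bar> * \<bar>p\<bar> \<le> 1 * (N / 2)"
    using r1 abs_mult_le_half_power2_norm[of z] by (intro mult_mono) (auto simp: p_def N_def)
  then have "\<bar>2 * r * p\<bar> \<le> N" by (simp add: abs_mult)
  then have num': "\<bar>2 * r * p - N\<bar> \<le> 2 * N" using N0 by (auto simp: abs_le_iff)
  have "\<bar>bvn_score_deriv r z\<bar> \<le> \<bar>2 * r * p - N\<bar> / s ^ 2
          + 4 * \<bar>r\<bar> * \<bar>p * (1 + r\<^sup>2) - r * N\<bar> / s ^ 3 + (1 + r\<^sup>2) / s ^ 2"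
    using abs_triangle_ineq[of "(2 * r * p - N) / s\<^sup>2 + 4 * r * (p * (1 + r\<^sup>2) - r * N) / s ^ 3"
        "(1 + r\<^sup>2) / s\<^sup>2"]
      abs_triangle_ineq[of "(2 * r * p - N) / s\<^sup>2" "4 * r * (p * (1 + r\<^sup>2) - r * N) / s ^ 3"] m
    by (simp add: bvn_score_deriv_def p_def N_def s_def abs_mult mult.assoc)
  also have "\<dots> \<le> (2 * N) / m ^ 3 + (8 * N) / m ^ 3 + 2 / m ^ 3"
  proof (intro add_mono)
    show "\<bar>2 * r * p - N\<bar> / s ^ 2 \<le> (2 * N) / m ^ 3"
      using num' by (intro bound) auto
    have "4 * \<bar>r\<bar> * \<bar>p * (1 + r\<^sup>2) - r * N\<bar> \<le> 4 * 1 * (2 * N)" using r1 num by (intro mult_mono) auto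
    then show "4 * \<bar>r\<bar> * \<bar>p * (1 + r\<^sup>2) - r * N\<bar> / s ^ 3 \<le> (8 * N) / m ^ 3"
      by (intro bound) auto
    show "(1 + r\<^sup>2) / s ^ 2 \<le> 2 / m ^ 3"
      using r1 by (intro bound) auto
  qed
  also have "\<dots> \<le> 12 / m ^ 3 * (1 + N)" using m N0 by (simp add: field_simps)
  finally show ?thesis by (simp add: m_def N_def)
qed

lemma square_mult_exp_le:
  fixes N :: real assumes "0 \<le> N"
  shows "(1 + N)\<^sup>2 * exp (- N / 4) \<le> 256 * exp (- N / 8)"
proof -
  have "(1 + N)\<^sup>2 \<le> (16 * (1 + N / 16))\<^sup>2" using assms by (intro power_mono) auto
  also have "\<dots> = 256 * (1 + N / 16)\<^sup>2" by (simp only: power_mult_distrib) simp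
  also have "(1 + N / 16)\<^sup>2 \<le> (exp (N / 16))\<^sup>2" using assms by (intro power_mono exp_ge_add_one_self) auto
  also have "(exp (N / 16))\<^sup>2 = exp (N / 8)" by (simp add: power2_eq_square exp_add[symmetric])
  finally have "(1 + N)\<^sup>2 * exp (- N / 4) \<le> 256 * exp (N / 8) * exp (- N / 4)" by simp
  also have "\<dots> = 256 * exp (- N / 8)" by (simp add: mult.assoc exp_add[symmetric])
  finally show ?thesis .
qed

text \<open>With \<open>u = 12 / (1 - c\<^sup>2) ^ 3 * (1 + (norm z)\<^sup>2)\<close> bounding the score and its derivative, the
  factor \<open>exp (- (norm z)\<^sup>2 / 4)\<close> of the density absorbs \<open>2 * u\<^sup>2\<close> at the cost of halving the exponent.\<close>

definition bvn_dominator :: "real \<Rightarrow> real \<times> real \<Rightarrow> real" where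
  "bvn_dominator c z = 512 * (12 / (1 - c\<^sup>2) ^ 3)\<^sup>2 / sqrt (1 - c\<^sup>2) * exp (- (norm z)\<^sup>2 / 8)"

lemma bvn_dominator_bounds:
  assumes "\<bar>r\<bar> \<le> c" "c < 1"
  shows "bvn_pdf r z \<le> bvn_dominator c z"
    and "\<bar>bvn_pdf r z * bvn_score r z\<bar> \<le> bvn_dominator c z"
    and "\<bar>bvn_pdf r z * ((bvn_score r z)\<^sup>2 + bvn_score_deriv r z)\<bar> \<le> bvn_dominator c z"
proof -
  define N where "N = (norm z)\<^sup>2"
  define E where "E = exp (- N / 4) / sqrt (1 - c\<^sup>2)"
  define u where "u = 12 / (1 - c\<^sup>2) ^ 3 * (1 + N)"
  have m: "0 < 1 - c\<^sup>2" using assms by (intro one_minus_square_pos) simp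
  have N0: "0 \<le> N" by (simp add: N_def)
  have pdf: "0 \<le> bvn_pdf r z" "bvn_pdf r z \<le> E"
    using bvn_pdf_pos[of r z] bvn_pdf_le[OF assms] assms by (auto simp: E_def N_def)
  have score: "\<bar>bvn_score r z\<bar> \<le> u" "\<bar>bvn_score_deriv r z\<bar> \<le> u"
    using abs_bvn_score_le[OF assms] abs_bvn_score_deriv_le[OF assms] by (simp_all add: u_def N_def)
  have "1 \<le> 12 / (1 - c\<^sup>2) ^ 3"
    using m power_le_one[of "1 - c\<^sup>2" 3] by (simp add: field_simps)
  then have u1: "1 \<le> u" using N0 unfolding u_def by (metis le_add_same_cancel1 mult_mono' zero_le_one mult_1)
  have "E * (2 * u\<^sup>2) = 2 * (12 / (1 - c\<^sup>2) ^ 3)\<^sup>2 / sqrt (1 - c\<^sup>2) * ((1 + N)\<^sup>2 * exp (- N / 4))"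
    unfolding u_def power_mult_distrib by (simp add: E_def)
  also have "\<dots> \<le> bvn_dominator c z"
    using mult_left_mono[OF square_mult_exp_le[OF N0], of "2 * (12 / (1 - c\<^sup>2) ^ 3)\<^sup>2 / sqrt (1 - c\<^sup>2)"] m
    by (simp add: bvn_dominator_def N_def)
  finally have dom: "E * (2 * u\<^sup>2) \<le> bvn_dominator c z" .
  have "u \<le> u\<^sup>2" "1 \<le> u\<^sup>2" using u1 by (auto simp: power2_eq_square intro: order_trans[OF u1])
  then have "1 \<le> 2 * u\<^sup>2" "u \<le> 2 * u\<^sup>2" "u\<^sup>2 + u \<le> 2 * u\<^sup>2" by auto
  moreover have "0 \<le> E" using pdf by linarith
  ultimately have E_le: "E * 1 \<le> E * (2 * u\<^sup>2)" "E * u \<le> E * (2 * u\<^sup>2)" "E * (u\<^sup>2 + u) \<le> E * (2 * u\<^sup>2)"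
    by (intro mult_left_mono; simp)+
  show "bvn_pdf r z \<le> bvn_dominator c z" using pdf E_le dom by simp
  have "\<bar>bvn_pdf r z * bvn_score r z\<bar> \<le> E * u"
    using pdf score by (simp add: abs_mult mult_mono)
  then show "\<bar>bvn_pdf r z * bvn_score r z\<bar> \<le> bvn_dominator c z" using E_le dom by simp
  have "\<bar>(bvn_score r z)\<^sup>2 + bvn_score_deriv r z\<bar> \<le> u\<^sup>2 + u"
    using abs_triangle_ineq[of "(bvn_score r z)\<^sup>2" "bvn_score_deriv r z"] score
      power_mono[OF score(1) abs_ge_zero, of 2] by simp
  then have "\<bar>bvn_pdf r z * ((bvn_score r z)\<^sup>2 + bvn_score_deriv r z)\<bar> \<le> E * (u\<^sup>2 + u)"
    using pdf by (simp add: abs_mult mult_mono)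
  then show "\<bar>bvn_pdf r z * ((bvn_score r z)\<^sup>2 + bvn_score_deriv r z)\<bar> \<le> bvn_dominator c z"
    using E_le dom by simp
qed

lemma borel_measurable_bvn_pdf[measurable]: "bvn_pdf r \<in> borel_measurable borel"
  unfolding bvn_pdf_def borel_prod[symmetric] by measurable

lemma borel_measurable_bvn_score[measurable]: "bvn_score r \<in> borel_measurable borel"
  unfolding bvn_score_def power2_norm_prod borel_prod[symmetric] by measurable

lemma borel_measurable_bvn_score_deriv[measurable]: "bvn_score_deriv r \<in> borel_measurable borel"
  unfolding bvn_score_deriv_def power2_norm_prod borel_prod[symmetric] by measurable

lemma nn_integral_lborel_pair_mult:
  fixes f g :: "real \<Rightarrow> real"
  assumes [measurable]: "f \<in> borel_measurable borel" "g \<in> borel_measurable borel"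
    and "\<And>x. 0 \<le> f x" "\<And>x. 0 \<le> g x"
  shows "(\<integral>\<^sup>+z. ennreal (f (fst z) * g (snd z)) \<partial>lborel)
       = (\<integral>\<^sup>+x. ennreal (f x) \<partial>lborel) * (\<integral>\<^sup>+y. ennreal (g y) \<partial>lborel)"
proof -
  have "(\<integral>\<^sup>+z. ennreal (f (fst z) * g (snd z)) \<partial>lborel)
      = (\<integral>\<^sup>+x. \<integral>\<^sup>+y. ennreal (f (fst (x, y)) * g (snd (x, y))) \<partial>lborel \<partial>lborel)"
    unfolding lborel_prod[symmetric] by (rule lborel.nn_integral_fst[symmetric]) measurable
  also have "\<dots> = (\<integral>\<^sup>+x. ennreal (f x) * (\<integral>\<^sup>+y. ennreal (g y) \<partial>lborel) \<partial>lborel)"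
    using assms by (simp add: ennreal_mult nn_integral_cmult)
  also have "\<dots> = (\<integral>\<^sup>+x. ennreal (f x) \<partial>lborel) * (\<integral>\<^sup>+y. ennreal (g y) \<partial>lborel)"
    by (simp add: nn_integral_multc)
  finally show ?thesis .
qed

lemma nn_integral_normal_density: "0 < \<sigma> \<Longrightarrow> (\<integral>\<^sup>+x. ennreal (normal_density \<mu> \<sigma> x) \<partial>lborel) = 1"
  using nn_integral_eq_integral[of lborel "normal_density \<mu> \<sigma>"] by simp

lemma bvn_pdf_eq_normal_density_mult:
  assumes "\<bar>r\<bar> < 1"
  shows "bvn_pdf r z = normal_density 0 1 (fst z) * normal_density (r * fst z) (sqrt (1 - r\<^sup>2)) (snd z)"
proof -
  define x y s where "x = fst z" and "y = snd z" and "s = 1 - r\<^sup>2"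
  have s: "0 < s" using one_minus_square_pos[OF assms] by (simp add: s_def)
  have "- x\<^sup>2 / 2 + - (y - r * x)\<^sup>2 / (2 * s) = - (x\<^sup>2 - 2 * r * x * y + y\<^sup>2) / (2 * s)"
    using s by (simp add: field_simps s_def power2_eq_square)
  moreover have "sqrt (2 * pi) * sqrt (2 * pi * s) = 2 * pi * sqrt s"
  proof -
    have "sqrt (2 * pi) * sqrt (2 * pi * s) = (sqrt (2 * pi) * sqrt (2 * pi)) * sqrt s"
      by (simp add: real_sqrt_mult)
    also have "sqrt (2 * pi) * sqrt (2 * pi) = 2 * pi" using pi_gt_zero by simp
    finally show ?thesis .
  qed
  ultimately show ?thesis
    using s by (simp add: normal_density_def bvn_pdf_def x_def y_def s_def exp_add[symmetric])
qed

lemma nn_integral_bvn_pdf: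
  assumes "\<bar>r\<bar> < 1"
  shows "(\<integral>\<^sup>+z. ennreal (bvn_pdf r z) \<partial>lborel) = 1"
proof -
  have sq: "0 < sqrt (1 - r\<^sup>2)" using one_minus_square_pos[OF assms] by simp
  have "(\<lambda>z. normal_density 0 1 (fst z) * normal_density (r * fst z) (sqrt (1 - r\<^sup>2)) (snd z))
      \<in> borel_measurable (borel :: (real \<times> real) measure)"
    unfolding borel_prod[symmetric] normal_density_def by measurable
  then have [measurable]: "(\<lambda>z. normal_density 0 1 (fst z) * normal_density (r * fst z) (sqrt (1 - r\<^sup>2)) (snd z))
      \<in> borel_measurable (lborel \<Otimes>\<^sub>M lborel)"
    by (simp add: lborel_prod)
  have "(\<integral>\<^sup>+z. ennreal (bvn_pdf r z) \<partial>lborel)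
      = (\<integral>\<^sup>+x. \<integral>\<^sup>+y. ennreal (normal_density 0 1 x * normal_density (r * x) (sqrt (1 - r\<^sup>2)) y) \<partial>lborel \<partial>lborel)"
    unfolding bvn_pdf_eq_normal_density_mult[OF assms] lborel_prod[symmetric]
    by (subst lborel.nn_integral_fst[symmetric]) simp_all
  also have "\<dots> = (\<integral>\<^sup>+x. ennreal (normal_density 0 1 x) * (\<integral>\<^sup>+y. ennreal (normal_density (r * x) (sqrt (1 - r\<^sup>2)) y) \<partial>lborel) \<partial>lborel)"
    by (simp add: ennreal_mult nn_integral_cmult)
  also have "\<dots> = 1" using sq by (simp add: nn_integral_normal_density)
  finally show ?thesis .
qed

lemma prob_space_bvn: "\<bar>r\<bar> < 1 \<Longrightarrow> prob_space (bvn r)"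
  unfolding bvn_def by (rule prob_spaceI) (simp add: emeasure_density nn_integral_bvn_pdf)

lemma sets_bvn[simp, measurable_cong]: "sets (bvn r) = sets borel"
  by (simp add: bvn_def)

lemma integrable_bvn_dominator: "integrable lborel (bvn_dominator c)"
proof -
  define C where "C = 512 * (12 / (1 - c\<^sup>2) ^ 3)\<^sup>2 / sqrt (1 - c\<^sup>2) * (8 * pi)"
  have "bvn_dominator c = (\<lambda>z. C * (normal_density 0 2 (fst z) * normal_density 0 2 (snd z)))"
  proof
    fix z
    have "normal_density 0 2 (fst z) * normal_density 0 2 (snd z) = exp (- (norm z)\<^sup>2 / 8) / (8 * pi)"
      by (simp add: normal_density_def power2_norm_prod exp_add[symmetric] real_sqrt_mult[symmetric]
          add_divide_distrib diff_divide_distrib)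
    then show "bvn_dominator c z = C * (normal_density 0 2 (fst z) * normal_density 0 2 (snd z))"
      by (simp add: bvn_dominator_def C_def)
  qed
  moreover have "integrable lborel (\<lambda>z::real \<times> real. normal_density 0 2 (fst z) * normal_density 0 2 (snd z))"
    by (rule integrableI_nonneg)
       (auto simp: nn_integral_lborel_pair_mult nn_integral_normal_density borel_prod[symmetric]
             simp flip: ennreal_mult)
  ultimately show ?thesis by simp
qed

lemma measure_bvn_eq_integral:
  assumes "\<bar>r\<bar> < 1" and [measurable]: "S \<in> sets borel"
  shows "measure (bvn r) S = (\<integral>z. indicator S z * bvn_pdf r z \<partial>lborel)"
proof -
  have "emeasure (bvn r) S = (\<integral>\<^sup>+z. ennreal (indicator S z * bvn_pdf r z) \<partial>lborel)"
    unfolding bvn_def by (subst emeasure_density) (auto intro!: nn_integral_cong simp: indicator_def)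
  moreover have "(\<integral>z. indicator S z * bvn_pdf r z \<partial>lborel)
      = enn2real (\<integral>\<^sup>+z. ennreal (indicator S z * bvn_pdf r z) \<partial>lborel)"
    using bvn_pdf_pos[OF assms(1)] by (intro integral_eq_nn_integral) (auto simp: less_imp_le)
  ultimately show ?thesis by (simp add: measure_def)
qed

section \<open>Differentiability of probabilities in the correlation\<close>

lemma has_real_derivative_set_integral_bvn_dominated:
  fixes f f' :: "real \<Rightarrow> real \<times> real \<Rightarrow> real"
  assumes r0: "\<bar>r0\<bar> < 1" and [measurable]: "S \<in> sets borel"
    and [measurable]: "\<And>r. f r \<in> borel_measurable borel" "\<And>r. f' r \<in> borel_measurable borel"
    and der: "\<And>r z. \<bar>r\<bar> < 1 \<Longrightarrow> ((\<lambda>r. f r z) has_real_derivative f' r z) (at r)"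
    and dom: "\<And>c r z. \<bar>r\<bar> \<le> c \<Longrightarrow> c < 1 \<Longrightarrow> \<bar>f r z\<bar> \<le> bvn_dominator c z"
      "\<And>c r z. \<bar>r\<bar> \<le> c \<Longrightarrow> c < 1 \<Longrightarrow> \<bar>f' r z\<bar> \<le> bvn_dominator c z"
  shows "((\<lambda>r. \<integral>z. indicator S z * f r z \<partial>lborel) has_real_derivative
           (\<integral>z. indicator S z * f' r0 z \<partial>lborel)) (at r0)"
proof -
  define c where "c = (1 + \<bar>r0\<bar>) / 2"
  have c: "c < 1" "- c < r0" "r0 < c" using r0 by (auto simp: c_def field_simps split: abs_split)
  have in_c: "\<bar>r\<bar> \<le> c" "\<bar>r\<bar> < 1" if "r \<in> {-c<..<c}" for r using that c by auto
  have indicator_le: "\<bar>indicator S z * h\<bar> \<le> bvn_dominator c z" if "\<bar>h\<bar> \<le> bvn_dominator c z" for h z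
    using that by (auto simp: indicator_def)
  show ?thesis
  proof (rule has_real_derivative_integral[where g = "bvn_dominator c", OF c(2,3)])
    show "integrable lborel (\<lambda>z. indicator S z * f r z)" if "r \<in> {-c<..<c}" for r
    proof (rule Bochner_Integration.integrable_bound[OF integrable_bvn_dominator[of c]])
      have "\<bar>indicator S z * f r z\<bar> \<le> bvn_dominator c z" for z
        using indicator_le dom(1)[OF in_c(1)[OF that] c(1)] .
      then show "AE z in lborel. norm (indicator S z * f r z) \<le> norm (bvn_dominator c z)"
        by (intro AE_I2) (auto intro: order_trans[OF _ abs_ge_self])
    qed simp
    show "((\<lambda>r. indicator S z * f r z) has_real_derivative indicator S z * f' r z) (at r)"
      if "r \<in> {-c<..<c}" for r z
      using der[OF in_c(2)[OF that]] by (rule DERIV_cmult)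
  qed (use indicator_le dom(2)[OF in_c(1) c(1)] integrable_bvn_dominator in auto)
qed

lemma has_real_derivative_measure_bvn:
  assumes "\<bar>r\<bar> < 1" and [measurable]: "S \<in> sets borel"
  shows "((\<lambda>r. measure (bvn r) S) has_real_derivative
           (\<integral>z. indicator S z * (bvn_pdf r z * bvn_score r z) \<partial>lborel)) (at r)"
proof -
  have "((\<lambda>r. \<integral>z. indicator S z * bvn_pdf r z \<partial>lborel) has_real_derivative
          (\<integral>z. indicator S z * (bvn_pdf r z * bvn_score r z) \<partial>lborel)) (at r)"
    using bvn_dominator_bounds(1,2) bvn_pdf_pos
    by (intro has_real_derivative_set_integral_bvn_dominated assms has_real_derivative_bvn_pdf)
       (auto simp: less_imp_le)
  then show ?thesis
    by (rule has_field_derivative_transform_within_open[where S = "{-1<..<1}"])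
       (use assms in \<open>auto simp: measure_bvn_eq_integral abs_less_iff\<close>)
qed

lemma has_real_derivative_set_integral_bvn_pdf_score:
  assumes "\<bar>r\<bar> < 1" and [measurable]: "S \<in> sets borel"
  shows "((\<lambda>r. \<integral>z. indicator S z * (bvn_pdf r z * bvn_score r z) \<partial>lborel) has_real_derivative
           (\<integral>z. indicator S z * (bvn_pdf r z * ((bvn_score r z)\<^sup>2 + bvn_score_deriv r z)) \<partial>lborel)) (at r)"
  using bvn_dominator_bounds(2,3)
  by (intro has_real_derivative_set_integral_bvn_dominated assms has_real_derivative_bvn_pdf_score) auto

lemma measure_bvn_differentiable:
  "\<bar>r\<bar> < 1 \<Longrightarrow> S \<in> sets borel \<Longrightarrow> (\<lambda>r. measure (bvn r) S) differentiable (at r)"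
  using has_real_derivative_measure_bvn real_differentiable_def by blast

lemma deriv_measure_bvn_differentiable:
  assumes "\<bar>r\<bar> < 1" and "S \<in> sets borel"
  shows "deriv (\<lambda>r. measure (bvn r) S) differentiable (at r)"
proof -
  have "(deriv (\<lambda>r. measure (bvn r) S) has_real_derivative
          (\<integral>z. indicator S z * (bvn_pdf r z * ((bvn_score r z)\<^sup>2 + bvn_score_deriv r z)) \<partial>lborel)) (at r)"
    by (rule has_field_derivative_transform_within_open[OF
          has_real_derivative_set_integral_bvn_pdf_score[OF assms], where S = "{-1<..<1}"])
       (use assms in \<open>auto simp: abs_less_iff intro!: DERIV_imp_deriv[THEN sym] has_real_derivative_measure_bvn\<close>)
  then show ?thesis using real_differentiable_def by blast
qed

section \<open>Symmetries of the bivariate normal law\<close>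

lemma measure_bvn_vimage:
  fixes T :: "real \<times> real \<Rightarrow> real \<times> real"
  assumes "distr lborel borel T = lborel" and [measurable]: "T \<in> borel_measurable borel"
    and pdf: "\<And>z. bvn_pdf r (T z) = bvn_pdf r' z" and [measurable]: "A \<in> sets borel"
  shows "measure (bvn r) A = measure (bvn r') (T -` A)"
proof -
  have "emeasure (bvn r) A = (\<integral>\<^sup>+z. ennreal (bvn_pdf r z) * indicator A z \<partial>distr lborel borel T)"
    unfolding bvn_def assms(1) by (rule emeasure_density) auto
  also have "\<dots> = (\<integral>\<^sup>+z. ennreal (bvn_pdf r' z) * indicator (T -` A) z \<partial>lborel)"
    by (subst nn_integral_distr) (auto simp: pdf indicator_def)
  also have "\<dots> = emeasure (bvn r') (T -` A)"
    unfolding bvn_def by (rule emeasure_density[symmetric]) (use measurable_sets[of T borel borel A] in auto)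
  finally show ?thesis by (simp add: measure_def)
qed

lemma borel_measurable_swap[measurable]: "(\<lambda>z::real \<times> real. (snd z, fst z)) \<in> borel_measurable borel"
  by (intro borel_measurable_continuous_onI continuous_intros)

lemma borel_measurable_uminus_pair[measurable]: "(uminus :: real \<times> real \<Rightarrow> _) \<in> borel_measurable borel"
  by (intro borel_measurable_continuous_onI continuous_intros)

lemma borel_measurable_uminus_fst[measurable]: "(\<lambda>z::real \<times> real. (- fst z, snd z)) \<in> borel_measurable borel"
  by (intro borel_measurable_continuous_onI continuous_intros)

lemma distr_lborel_uminus: "distr lborel borel (\<lambda>z::real \<times> real. - z) = lborel"
  using lborel_affine[of "-1" "0::real \<times> real"] by (simp add: density_1)

lemma distr_lborel_swap: "distr lborel borel (\<lambda>z::real \<times> real. (snd z, fst z)) = lborel"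
proof -
  have "distr lborel borel (\<lambda>z::real \<times> real. (snd z, fst z))
      = distr (lborel \<Otimes>\<^sub>M lborel) (lborel \<Otimes>\<^sub>M lborel) (\<lambda>(x, y). (y, x))"
  proof (rule distr_cong)
    show "lborel = lborel \<Otimes>\<^sub>M (lborel :: real measure)" by (simp add: lborel_prod)
    show "sets (borel :: (real \<times> real) measure) = sets (lborel \<Otimes>\<^sub>M lborel :: (real \<times> real) measure)"
      by (simp only: lborel_prod) simp
  qed auto
  also have "\<dots> = lborel \<Otimes>\<^sub>M lborel" by (rule lborel_pair.distr_pair_swap[symmetric])
  finally show ?thesis by (simp add: lborel_prod)
qed

lemma distr_lborel_uminus_fst: "distr lborel borel (\<lambda>z::real \<times> real. (- fst z, snd z)) = lborel"
proof -
  define c :: "real \<times> real \<Rightarrow> real" where "c j = (if j = (1, 0) then -1 else 1)" for j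
  have B: "(Basis :: (real \<times> real) set) = {(1, 0), (0, 1)}" by (auto simp: Basis_prod_def)
  have "lborel = density (distr lborel borel (\<lambda>x::real \<times> real. 0 + (\<Sum>j\<in>Basis. (c j * (x \<bullet> j)) *\<^sub>R j)))
                   (\<lambda>_. (\<Prod>j\<in>Basis. \<bar>c j\<bar>))"
    by (rule lborel_affine_euclidean) (auto simp: c_def)
  moreover have "(\<lambda>x::real \<times> real. 0 + (\<Sum>j\<in>Basis. (c j * (x \<bullet> j)) *\<^sub>R j)) = (\<lambda>z. (- fst z, snd z))"
    by (auto simp: B c_def inner_prod_def)
  ultimately show ?thesis by (simp add: B c_def density_1)
qed

lemma AE_lborel_not_on_grid_lines:
  assumes "finite F"
  shows "AE z in (lborel :: (real \<times> real) measure). fst z \<notin> F \<and> snd z \<notin> F"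
proof -
  have F: "F \<in> sets lborel" "emeasure lborel F = 0"
    using finite_imp_null_set_lborel[OF assms] by auto
  then have "F \<times> UNIV \<in> null_sets (lborel \<Otimes>\<^sub>M lborel)" "UNIV \<times> F \<in> null_sets (lborel \<Otimes>\<^sub>M lborel)"
    by (simp_all add: null_sets_def lborel.emeasure_pair_measure_Times)
  then have "F \<times> UNIV \<union> UNIV \<times> F \<in> null_sets (lborel :: (real \<times> real) measure)"
    unfolding lborel_prod by (rule null_sets.Un)
  then show ?thesis by (rule AE_I') auto
qed

definition code2_cell :: "real \<Rightarrow> nat \<times> nat \<Rightarrow> (real \<times> real) set" where
  "code2_cell w c = {z. (code2 w (fst z), code2 w (snd z)) = c}"

lemma Pcell_eq_measure_code2_cell: "Pcell i j r w = measure (bvn r) (code2_cell w (i, j))"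
  by (simp add: Pcell_def code2_cell_def)

lemma code2_le_3: "code2 w t \<le> 3"
  by (simp add: code2_def)

lemma borel_measurable_code2[measurable]: "code2 w \<in> borel_measurable borel"
  unfolding code2_def by measurable

lemma code2_cell_sets[measurable]: "code2_cell w c \<in> sets borel"
proof -
  have "code2_cell w c = {z \<in> space (borel \<Otimes>\<^sub>M borel). code2 w (fst z) = fst c \<and> code2 w (snd z) = snd c}"
    by (auto simp: code2_cell_def space_pair_measure prod_eq_iff)
  also have "\<dots> \<in> sets (borel \<Otimes>\<^sub>M borel)" by measurable
  finally show ?thesis by (metis borel_prod)
qed

lemma code2_uminus: "0 < w \<Longrightarrow> t \<notin> {-w, 0, w} \<Longrightarrow> code2 w (- t) = 3 - code2 w t"
  by (auto simp: code2_def)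

lemma measure_bvn_eq_if_AE:
  assumes "finite F" and [measurable]: "A \<in> sets borel" "B \<in> sets borel"
    and "\<And>z. fst z \<notin> F \<Longrightarrow> snd z \<notin> F \<Longrightarrow> z \<in> A \<longleftrightarrow> z \<in> B"
  shows "measure (bvn r) A = measure (bvn r) B"
proof (rule measure_eq_AE)
  have "AE z in lborel. z \<in> A \<longleftrightarrow> z \<in> B"
    using AE_lborel_not_on_grid_lines[OF assms(1)] by eventually_elim (use assms(4) in auto)
  then show "AE z in bvn r. z \<in> A \<longleftrightarrow> z \<in> B"
    unfolding bvn_def by (subst AE_density) auto
qed auto

lemma Pcell_swap: "Pcell j i r w = Pcell i j r w"
proof -
  have "measure (bvn r) (code2_cell w (j, i))
      = measure (bvn r) ((\<lambda>z. (snd z, fst z)) -` code2_cell w (j, i))"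
    by (rule measure_bvn_vimage[OF distr_lborel_swap]) (auto simp: bvn_pdf_def algebra_simps)
  also have "(\<lambda>z. (snd z, fst z)) -` code2_cell w (j, i) = code2_cell w (i, j)"
    by (auto simp: code2_cell_def)
  finally show ?thesis by (simp add: Pcell_eq_measure_code2_cell)
qed

lemma code2_flip_iff: "i \<le> 3 \<Longrightarrow> 3 - code2 w t = 3 - i \<longleftrightarrow> code2 w t = i"
  using code2_le_3[of w t] by linarith

lemma Pcell_flip:
  assumes "0 < w" "i \<le> 3" "j \<le> 3"
  shows "Pcell (3 - i) (3 - j) r w = Pcell i j r w"
proof -
  have "measure (bvn r) (code2_cell w (3 - i, 3 - j))
      = measure (bvn r) (uminus -` code2_cell w (3 - i, 3 - j))"
    by (rule measure_bvn_vimage[OF distr_lborel_uminus]) (auto simp: bvn_pdf_def)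
  also have "\<dots> = measure (bvn r) (code2_cell w (i, j))"
  proof (rule measure_bvn_eq_if_AE[where F = "{-w, 0, w}"])
    show "uminus -` code2_cell w (3 - i, 3 - j) \<in> sets borel"
      using measurable_sets[OF borel_measurable_uminus_pair code2_cell_sets] by simp
  qed (use assms code2_cell_sets code2_uminus[OF assms(1)] code2_flip_iff in \<open>auto simp: code2_cell_def\<close>)
  finally show ?thesis by (simp add: Pcell_eq_measure_code2_cell)
qed

lemma Pcell_flip_fst:
  assumes "0 < w" "i \<le> 3"
  shows "Pcell (3 - i) j r w = Pcell i j (- r) w"
proof -
  have "measure (bvn r) (code2_cell w (3 - i, j))
      = measure (bvn (- r)) ((\<lambda>z. (- fst z, snd z)) -` code2_cell w (3 - i, j))"
    by (rule measure_bvn_vimage[OF distr_lborel_uminus_fst]) (auto simp: bvn_pdf_def)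
  also have "\<dots> = measure (bvn (- r)) (code2_cell w (i, j))"
  proof (rule measure_bvn_eq_if_AE[where F = "{-w, 0, w}"])
    show "(\<lambda>z. (- fst z, snd z)) -` code2_cell w (3 - i, j) \<in> sets borel"
      using measurable_sets[OF borel_measurable_uminus_fst code2_cell_sets] by simp
  qed (use assms code2_cell_sets code2_uminus[OF assms(1)] code2_flip_iff in \<open>auto simp: code2_cell_def\<close>)
  finally show ?thesis by (simp add: Pcell_eq_measure_code2_cell)
qed

lemma code2_constant_on_interval:
  assumes "0 < w" "i \<le> 3"
  obtains a b where "a < b" "\<And>t. t \<in> {a<..<b} \<Longrightarrow> code2 w t = i"
proof -
  consider "i = 0" | "i = 1" | "i = 2" | "i = 3" using assms(2) by linarith
  then show ?thesis
  proof cases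
    case 1 with assms show ?thesis by (intro that[of "- w - 1" "- w"]) (auto simp: code2_def)
  next
    case 2 with assms show ?thesis by (intro that[of "- w" 0]) (auto simp: code2_def)
  next
    case 3 with assms show ?thesis by (intro that[of 0 w]) (auto simp: code2_def)
  next
    case 4 with assms show ?thesis by (intro that[of w "w + 1"]) (auto simp: code2_def)
  qed
qed

lemma measure_bvn_pos:
  assumes r: "\<bar>r\<bar> < 1" and [measurable]: "A \<in> sets borel"
    and "a < b" "c < d" and box: "{a<..<b} \<times> {c<..<d} \<subseteq> A"
  shows "0 < measure (bvn r) A"
proof -
  interpret prob_space "bvn r" using r by (rule prob_space_bvn)
  have "emeasure (bvn r) A \<noteq> 0"
  proof
    assume "emeasure (bvn r) A = 0"
    then have "AE z in lborel. ennreal (bvn_pdf r z) * indicator A z = 0"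
      unfolding bvn_def by (subst (asm) emeasure_density) (auto simp: nn_integral_0_iff_AE)
    then have "AE z in lborel. z \<notin> {a<..<b} \<times> {c<..<d}"
    proof eventually_elim
      case (elim z)
      show ?case
      proof
        assume "z \<in> {a<..<b} \<times> {c<..<d}"
        with box have "indicator A z = (1 :: ennreal)" by auto
        with elim bvn_pdf_pos[OF r, of z] show False by simp
      qed
    qed
    moreover have "{a<..<b} \<times> {c<..<d} \<in> sets borel"
      by (intro borel_open open_Times) auto
    ultimately have "emeasure lborel ({a<..<b} \<times> {c<..<d}) = 0"
      by (subst AE_iff_measurable[symmetric]) auto
    moreover have "emeasure (lborel :: (real \<times> real) measure) ({a<..<b} \<times> {c<..<d}) = ennreal ((b - a) * (d - c))"
      using assms by (simp add: lborel_prod[symmetric] lborel.emeasure_pair_measure_Times ennreal_mult)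
    ultimately show False using assms by simp
  qed
  then show ?thesis using measure_nonneg[of "bvn r" A] by (simp add: emeasure_eq_measure less_le)
qed

lemma Pcell_pos:
  assumes "0 < w" "\<bar>r\<bar> < 1" "i \<le> 3" "j \<le> 3"
  shows "0 < Pcell i j r w"
proof -
  obtain a b where ab: "a < b" "\<And>t. t \<in> {a<..<b} \<Longrightarrow> code2 w t = i"
    using code2_constant_on_interval[OF assms(1,3)] by blast
  obtain c d where cd: "c < d" "\<And>t. t \<in> {c<..<d} \<Longrightarrow> code2 w t = j"
    using code2_constant_on_interval[OF assms(1,4)] by blast
  have "{a<..<b} \<times> {c<..<d} \<subseteq> code2_cell w (i, j)"
    using ab(2) cd(2) by (auto simp: code2_cell_def)
  then show ?thesis
    unfolding Pcell_eq_measure_code2_cell by (rule measure_bvn_pos[OF assms(2) code2_cell_sets ab(1) cd(1)])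
qed

lemma sum_Pcell:
  assumes "\<bar>r\<bar> < 1"
  shows "(\<Sum>(i, j)\<in>{0..3} \<times> {0..3}. Pcell i j r w) = 1"
proof -
  interpret prob_space "bvn r" using assms by (rule prob_space_bvn)
  have "(\<Union>c\<in>{0..3} \<times> {0..3}. code2_cell w c) = space (bvn r)"
  proof (intro equalityI subsetI)
    fix z
    show "z \<in> (\<Union>c\<in>{0..3} \<times> {0..3}. code2_cell w c)"
      by (rule UN_I[of "(code2 w (fst z), code2 w (snd z))"]) (simp_all add: code2_le_3 code2_cell_def)
  qed (simp add: bvn_def)
  moreover have "disjoint_family_on (code2_cell w) ({0..3} \<times> {0..3})"
    by (simp add: disjoint_family_on_def code2_cell_def disjoint_iff)
  ultimately have "(\<Sum>c\<in>{0..3} \<times> {0..3}. measure (bvn r) (code2_cell w c)) = 1"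
    using finite_measure_finite_Union[of "{0..3} \<times> {0..3}" "code2_cell w"] prob_space
    by (simp add: image_subset_iff)
  then show ?thesis
    by (simp add: Pcell_eq_measure_code2_cell split_def)
qed

lemma P22_eq_Pcell: "0 < w \<Longrightarrow> P22 r w = Pcell 2 2 r w"
  unfolding P22_def Pcell_def by (rule arg_cong[where f = "measure (bvn r)"]) (auto simp: code2_def)

lemma P23_eq_Pcell: "0 < w \<Longrightarrow> P23 r w = Pcell 3 2 r w"
  unfolding P23_def Pcell_def by (rule arg_cong[where f = "measure (bvn r)"]) (auto simp: code2_def)

lemma P33_eq_Pcell: "0 < w \<Longrightarrow> P33 r w = Pcell 3 3 r w"
  unfolding P33_def Pcell_def by (rule arg_cong[where f = "measure (bvn r)"]) (auto simp: code2_def)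

lemma Pcell_eq_same_sign:
  assumes "0 < w"
  shows "Pcell 1 1 r w = P22 r w" "Pcell 2 2 r w = P22 r w"
    "Pcell 0 1 r w = P23 r w" "Pcell 1 0 r w = P23 r w" "Pcell 2 3 r w = P23 r w" "Pcell 3 2 r w = P23 r w"
    "Pcell 0 0 r w = P33 r w" "Pcell 3 3 r w = P33 r w"
  using assms Pcell_flip[OF assms, of 2 2] Pcell_flip[OF assms, of 3 2] Pcell_flip[OF assms, of 3 3]
    Pcell_swap[of 3 2] Pcell_swap[of 0 1]
  by (simp_all add: P22_eq_Pcell P23_eq_Pcell P33_eq_Pcell)

lemma Pcell_eq_opposite_sign:
  assumes "0 < w"
  shows "Pcell 1 2 r w = P22 (- r) w" "Pcell 2 1 r w = P22 (- r) w"
    "Pcell 0 2 r w = P23 (- r) w" "Pcell 2 0 r w = P23 (- r) w"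
    "Pcell 1 3 r w = P23 (- r) w" "Pcell 3 1 r w = P23 (- r) w"
    "Pcell 0 3 r w = P33 (- r) w" "Pcell 3 0 r w = P33 (- r) w"
  using assms Pcell_flip_fst[OF assms, of 2 2] Pcell_flip_fst[OF assms, of 3 2]
    Pcell_flip_fst[OF assms, of 3 3] Pcell_flip[OF assms, of 0 2] Pcell_swap[of 1 2]
    Pcell_swap[of 0 2] Pcell_swap[of 1 3] Pcell_swap[of 0 3]
  by (simp_all add: P22_eq_Pcell P23_eq_Pcell P33_eq_Pcell)

lemma
  assumes "\<bar>r\<bar> < 1" "m \<in> {..<k}" and [measurable]: "C \<in> sets borel"
  shows integrable_sample_indicator: "integrable (sample k r) (\<lambda>\<omega>. indicator C (\<omega> m) :: real)"
    and integral_sample_indicator: "(\<integral>\<omega>. indicator C (\<omega> m) \<partial>sample k r) = measure (bvn r) C"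
proof -
  interpret prob_space "bvn r" using assms(1) by (rule prob_space_bvn)
  have distr: "distr (sample k r) (bvn r) (\<lambda>\<omega>. \<omega> m) = bvn r"
    unfolding sample_def using assms(2) prob_space_bvn[OF assms(1)] by (intro distr_PiM_component) auto
  have meas: "(\<lambda>\<omega>. \<omega> m) \<in> measurable (sample k r) (bvn r)"
    unfolding sample_def using assms(2) by (rule measurable_component_singleton)
  have ind: "(indicator C :: _ \<Rightarrow> real) \<in> borel_measurable (bvn r)"
    by (simp add: borel_measurable_indicator)
  have "integrable (bvn r) (indicator C :: _ \<Rightarrow> real)"
    by (rule integrable_real_indicator) (auto simp: less_top[symmetric])
  then show "integrable (sample k r) (\<lambda>\<omega>. indicator C (\<omega> m) :: real)"
    using integrable_distr_eq[OF meas ind] distr by simp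
  show "(\<integral>\<omega>. indicator C (\<omega> m) \<partial>sample k r) = measure (bvn r) C"
    using integral_distr[OF meas ind] distr by simp
qed

lemma real_cnt_eq_sum_indicator: "real (cnt w k i j \<omega>) = (\<Sum>m<k. indicator (code2_cell w (i, j)) (\<omega> m))"
proof -
  have "{m \<in> {..<k}. code2 w (fst (\<omega> m)) = i \<and> code2 w (snd (\<omega> m)) = j}
      = {..<k} \<inter> {m. \<omega> m \<in> code2_cell w (i, j)}"
    by (auto simp: code2_cell_def)
  then have "real (cnt w k i j \<omega>) = real (card ({..<k} \<inter> {m. \<omega> m \<in> code2_cell w (i, j)}))"
    by (simp add: cnt_def)
  also have "\<dots> = (\<Sum>m<k. indicator {m. \<omega> m \<in> code2_cell w (i, j)} m)"
    by (simp only: sum_indicator_eq_card[symmetric] finite_lessThan of_nat_sum) (simp add: indicator_def)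
  finally have "real (cnt w k i j \<omega>) = (\<Sum>m<k. indicator {m. \<omega> m \<in> code2_cell w (i, j)} m)" .
  then show ?thesis by (simp add: indicator_def)
qed

lemma fisher2_eq_sum_Pcell:
  assumes "0 < w" "\<bar>rho\<bar> < 1"
  shows "fisher2 k rho w
       = real k * (\<Sum>(i, j)\<in>{0..3} \<times> {0..3}. (deriv (\<lambda>r. Pcell i j r w) rho)\<^sup>2 / Pcell i j rho w)"
proof -
  let ?C = "{0..3::nat} \<times> {0..3::nat}"
  let ?p = "\<lambda>c r. measure (bvn r) (code2_cell w c)"
  let ?N = "\<lambda>c \<omega>. \<Sum>m<k. indicator (code2_cell w c) (\<omega> m) :: real"
  have "loglik w k \<omega> = (\<lambda>r. \<Sum>c\<in>?C. ?N c \<omega> * ln (?p c r))" for \<omega>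
    by (simp add: fun_eq_iff loglik_def sum.cartesian_product real_cnt_eq_sum_indicator
        Pcell_eq_measure_code2_cell split_def)
  then have "fisher2 k rho w = - (\<integral>\<omega>. deriv (deriv (\<lambda>r. \<Sum>c\<in>?C. ?N c \<omega> * ln (?p c r))) rho \<partial>sample k rho)"
    by (simp add: fisher2_def)
  also have "\<dots> = real k * (\<Sum>c\<in>?C. (deriv (?p c) rho)\<^sup>2 / ?p c rho)"
  proof (rule fisher_information_finite_family[where U = "{-1<..<1}"])
    show "0 < ?p c r" if "c \<in> ?C" "r \<in> {-1<..<1}" for c r
      using that Pcell_pos[OF assms(1), of r "fst c" "snd c"] by (auto simp: Pcell_eq_measure_code2_cell)
    show "(\<Sum>c\<in>?C. ?p c r) = 1" if "r \<in> {-1<..<1}" for r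
      using that sum_Pcell[of r w] by (auto simp: Pcell_eq_measure_code2_cell split_def)
    show "integrable (sample k rho) (?N c)" for c
      using assms(2) by (intro Bochner_Integration.integrable_sum integrable_sample_indicator) auto
    show "(\<integral>\<omega>. ?N c \<omega> \<partial>sample k rho) = real k * ?p c rho" for c
      using assms(2) integrable_sample_indicator
      by (subst Bochner_Integration.integral_sum) (auto simp: integral_sample_indicator)
  qed (use assms(2) in \<open>auto simp: measure_bvn_differentiable deriv_measure_bvn_differentiable\<close>)
  finally show ?thesis by (simp add: Pcell_eq_measure_code2_cell split_def)
qed

lemma sum_power2_deriv_divide_Pcell:
  assumes w: "0 < w" and rho: "\<bar>rho\<bar> < 1"
  shows "(\<Sum>(i, j)\<in>{0..3} \<times> {0..3}. (deriv (\<lambda>r. Pcell i j r w) rho)\<^sup>2 / Pcell i j rho w) = 2 *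
     ( (deriv (\<lambda>r. P22 r w) rho)\<^sup>2 / P22 rho w
     + 2 * (deriv (\<lambda>r. P23 r w) rho)\<^sup>2 / P23 rho w
     + (deriv (\<lambda>r. P33 r w) rho)\<^sup>2 / P33 rho w
     + (deriv (\<lambda>r. P22 r w) (-rho))\<^sup>2 / P22 (-rho) w
     + 2 * (deriv (\<lambda>r. P23 r w) (-rho))\<^sup>2 / P23 (-rho) w
     + (deriv (\<lambda>r. P33 r w) (-rho))\<^sup>2 / P33 (-rho) w )"
proof -
  have "(\<lambda>r. P r w) differentiable (at (- rho))" if "P \<in> {P22, P23, P33}" for P
    using that rho measure_bvn_differentiable[of "- rho"]
    by (auto simp: P22_eq_Pcell[OF w] P23_eq_Pcell[OF w] P33_eq_Pcell[OF w] Pcell_eq_measure_code2_cell)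
  from this[THEN deriv_comp_uminus] have
    "deriv (\<lambda>r. P22 (- r) w) rho = - deriv (\<lambda>r. P22 r w) (- rho)"
    "deriv (\<lambda>r. P23 (- r) w) rho = - deriv (\<lambda>r. P23 r w) (- rho)"
    "deriv (\<lambda>r. P33 (- r) w) rho = - deriv (\<lambda>r. P33 r w) (- rho)"
    by simp_all
  moreover have "{0..3::nat} = {0, 1, 2, 3}" by auto
  ultimately show ?thesis
    by (simp add: sum.cartesian_product[symmetric] Pcell_eq_same_sign[OF w] Pcell_eq_opposite_sign[OF w]
        algebra_simps del: One_nat_def)
qed

theorem theorem1:
  fixes w rho :: real and k :: nat
  assumes "w > 0" and "-1 < rho" and "rho < 1"
  shows "fisher2 k rho w = 2 * real k *
     ( (deriv (\<lambda>r. P22 r w) rho)\<^sup>2 / P22 rho w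
     + 2 * (deriv (\<lambda>r. P23 r w) rho)\<^sup>2 / P23 rho w
     + (deriv (\<lambda>r. P33 r w) rho)\<^sup>2 / P33 rho w
     + (deriv (\<lambda>r. P22 r w) (-rho))\<^sup>2 / P22 (-rho) w
     + 2 * (deriv (\<lambda>r. P23 r w) (-rho))\<^sup>2 / P23 (-rho) w
     + (deriv (\<lambda>r. P33 r w) (-rho))\<^sup>2 / P33 (-rho) w )"
proof -
  have rho: "\<bar>rho\<bar> < 1" using assms(2,3) by linarith
  show ?thesis
    using fisher2_eq_sum_Pcell[OF assms(1) rho] sum_power2_deriv_divide_Pcell[OF assms(1) rho] by simp
qed

end
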